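(* Let $N\ge2$, $m>0$, $a_0>0$. For each large integer $K$ let $R>0$ be such that $d=2R\sin\frac\pi K$ satisfies $$a_0mR^{-m-1}=2\sin\frac{\pi}{K}\,\Psi(d),$$ and assume $d\to+\infty$ as $K\to\infty$. Then, as $K\to\infty$, $$d=m\ln K+\Big(m-\frac{N-3}{2}\Big)\ln(m\ln K)+O(1),$$ $$R=\frac{m}{2\pi}K\ln K+\frac{1}{2\pi}\Big(m-\frac{N-3}{2}\Big)K\ln(m\ln K)+O(K).$$
   Context: $w$ is the unique positive radial $H^1$ solution of $-\Delta w+w-w^p=0$ in $\mathbb{R}^N$ ($1<p$, $p<\frac{N+2}{N-2}$ if $N\ge3$), and $\Psi(s)=-\int_{\mathbb{R}^N}w(x-s\vec e)\,\mathrm{div}(w^p(x)\vec e)\,dx$ for a unit vector $\vec e$. One uses that $\Psi(s)=c_{N,p}s^{-\frac{N-1}{2}}e^{-s}(1+O(s^{-1}))$ as $s\to\infty$ for a constant $c_{N,p}>0$. *)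

theory Defs
  imports "HOL-Analysis.Analysis" "HOL-Library.Landau_Symbols"
begin

end

theory Submission
  imports Defs "HOL-Real_Asymp.Real_Asymp"
begin

text \<open>
  Taking logarithms in the balance equation, with \<open>R = d / (2 sin (\<pi>/K))\<close> and
  \<open>\<Psi>(d) \<sim> c d^e e^{-d}\<close> where \<open>e = -(N-1)/2\<close>, gives
  \<open>d - m ln K - (m+1+e) ln d \<rightarrow> const\<close>, because \<open>K sin (\<pi>/K) \<rightarrow> \<pi>\<close>.
  This forces \<open>d \<sim> m ln K\<close>, so \<open>ln d\<close> may be replaced by \<open>ln (m ln K)\<close> at the
  cost of \<open>o(1)\<close>. Finally \<open>R/K = d / (2 K sin (\<pi>/K)) = d/(2\<pi>) + O(ln K / K\<^sup>2)\<close>.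
\<close>

lemma tendsto_one_if_bigo_inverse:
  fixes f :: "real \<Rightarrow> real"
  assumes "(\<lambda>s. f s - 1) \<in> O[at_top](\<lambda>s. 1 / s)"
  shows "(f \<longlongrightarrow> 1) at_top"
proof -
  have "(\<lambda>s::real. 1 / s) \<in> o[at_top](\<lambda>_. 1)" by real_asymp
  with assms have "(\<lambda>s. f s - 1) \<in> o[at_top](\<lambda>_. 1)"
    by (rule landau_o.big_small_trans)
  from smalloD_tendsto[OF this] have "((\<lambda>s. f s - 1) \<longlongrightarrow> 0) at_top" by simp
  then show ?thesis by (simp add: LIM_zero_iff)
qed

lemma sin_pi_div_pos:
  assumes "K \<ge> 2"
  shows "sin (pi / real K) > 0"
proof (rule sin_gt_zero)
  show "0 < pi / real K" "pi / real K < pi" using assms by (simp_all add: field_simps)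
qed

lemma ln_balance_identity:
  fixes R s d P K a0 m c e \<rho> :: real
  assumes R: "R > 0" and s: "s > 0" and K: "K > 0" and d: "d = 2 * R * s"
    and balance: "a0 * m * R powr (- m - 1) = 2 * s * P"
    and c: "c > 0" and a0: "a0 > 0" and m: "m > 0"
    and \<rho>: "\<rho> = P / (c * d powr e * exp (- d))"
  shows "d - m * ln K - (m + 1 + e) * ln d
           = ln \<rho> + ln c - ln (a0 * m) - m * ln 2 - m * ln (s * K)"
proof -
  have "d > 0" using R s d by simp
  have P: "P = a0 * m * R powr (- m - 1) / (2 * s)" using balance s by (simp add: field_simps)
  have "P > 0" unfolding P using R s a0 m by simp
  have ln_P: "ln P = ln (a0 * m) + (- m - 1) * ln R - ln 2 - ln s"
    unfolding P using R s a0 m by (simp add: ln_div ln_mult ln_powr)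
  have ln_\<rho>: "ln \<rho> = ln P - ln c - e * ln d + d"
    unfolding \<rho> using \<open>P > 0\<close> c \<open>d > 0\<close> by (simp add: ln_div ln_mult ln_powr)
  have "R = d / (2 * s)" using d s by simp
  then have ln_R: "ln R = ln d - ln 2 - ln s"
    using \<open>d > 0\<close> s by (simp add: ln_div ln_mult)
  have "ln (s * K) = ln s + ln K" using s K by (simp add: ln_mult)
  with ln_\<rho> ln_P ln_R show ?thesis by (simp add: algebra_simps)
qed

lemma chord_balance_log_limit:
  fixes m a0 c e :: real and \<Psi> :: "real \<Rightarrow> real" and R d :: "nat \<Rightarrow> real"
  assumes m: "m > 0" and a0: "a0 > 0" and c: "c > 0"
    and \<Psi>_asymp: "(\<lambda>s. \<Psi> s / (c * s powr e * exp (- s)) - 1) \<in> O[at_top](\<lambda>s. 1 / s)"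
    and d_def: "\<And>K. d K = 2 * R K * sin (pi / real K)"
    and balance: "eventually (\<lambda>K. R K > 0 \<and>
                 a0 * m * R K powr (- m - 1) = 2 * sin (pi / real K) * \<Psi> (d K)) at_top"
    and d_lim: "filterlim d at_top at_top"
  shows "((\<lambda>K. d K - m * ln (real K) - (m + 1 + e) * ln (d K))
           \<longlongrightarrow> ln c - ln (a0 * m) - m * ln 2 - m * ln pi) at_top"
proof -
  define \<rho> where "\<rho> = (\<lambda>K. \<Psi> (d K) / (c * d K powr e * exp (- d K)))"
  have "((\<lambda>s. \<Psi> s / (c * s powr e * exp (- s))) \<longlongrightarrow> 1) at_top"
    using \<Psi>_asymp by (rule tendsto_one_if_bigo_inverse)
  from filterlim_compose[OF this d_lim] have "(\<rho> \<longlongrightarrow> 1) at_top"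
    by (simp add: \<rho>_def o_def)
  from tendsto_ln[OF this] have ln_\<rho>: "((\<lambda>K. ln (\<rho> K)) \<longlongrightarrow> 0) at_top" by simp
  have sin_K: "((\<lambda>K::nat. sin (pi / real K) * real K) \<longlongrightarrow> pi) at_top" by real_asymp
  have "((\<lambda>K. ln (\<rho> K) + ln c - ln (a0 * m) - m * ln 2 - m * ln (sin (pi / real K) * real K))
          \<longlongrightarrow> 0 + ln c - ln (a0 * m) - m * ln 2 - m * ln pi) at_top"
    by (intro tendsto_intros ln_\<rho> sin_K) simp
  moreover have "eventually (\<lambda>K.
      ln (\<rho> K) + ln c - ln (a0 * m) - m * ln 2 - m * ln (sin (pi / real K) * real K)
      = d K - m * ln (real K) - (m + 1 + e) * ln (d K)) at_top"
    using balance eventually_ge_at_top[of 2]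
  proof eventually_elim
    case (elim K)
    have "sin (pi / real K) > 0" using elim by (simp add: sin_pi_div_pos)
    with elim show ?case
      using ln_balance_identity[of "R K" "sin (pi / real K)" "real K" "d K" a0 m "\<Psi> (d K)" c "\<rho> K" e]
        d_def[of K] c a0 m by (auto simp: \<rho>_def mult.commute)
  qed
  ultimately show ?thesis by (simp add: tendsto_cong)
qed

lemma ratio_tendsto_one_if_log_balance:
  fixes d x :: "'a \<Rightarrow> real"
  assumes d: "filterlim d at_top F"
    and balance: "((\<lambda>t. d t - x t - \<alpha> * ln (d t)) \<longlongrightarrow> L) F"
  shows "((\<lambda>t. d t / x t) \<longlongrightarrow> 1) F"
proof -
  have "((\<lambda>s::real. ln s / s) \<longlongrightarrow> 0) at_top" by real_asymp
  from filterlim_compose[OF this d] have ln_d: "((\<lambda>t. ln (d t) / d t) \<longlongrightarrow> 0) F"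
    by (simp add: o_def)
  have inv_d: "((\<lambda>t. inverse (d t)) \<longlongrightarrow> 0) F"
    using d by (rule tendsto_inverse_0_at_top)
  have "((\<lambda>t. 1 - \<alpha> * (ln (d t) / d t) - (d t - x t - \<alpha> * ln (d t)) * inverse (d t))
          \<longlongrightarrow> 1 - \<alpha> * 0 - L * 0) F"
    by (intro tendsto_intros ln_d inv_d balance)
  moreover have "eventually (\<lambda>t.
      1 - \<alpha> * (ln (d t) / d t) - (d t - x t - \<alpha> * ln (d t)) * inverse (d t) = x t / d t) F"
    using filterlim_at_top_dense[THEN iffD1, OF d, rule_format, of 0]
    by eventually_elim (simp add: field_simps)
  ultimately have "((\<lambda>t. x t / d t) \<longlongrightarrow> 1) F" by (simp add: tendsto_cong)
  from tendsto_inverse[OF this] show ?thesis by simp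
qed

lemma log_balance_replace_argument:
  fixes d x :: "'a \<Rightarrow> real"
  assumes d: "filterlim d at_top F" and x: "filterlim x at_top F"
    and balance: "((\<lambda>t. d t - x t - \<alpha> * ln (d t)) \<longlongrightarrow> L) F"
  shows "((\<lambda>t. d t - x t - \<alpha> * ln (x t)) \<longlongrightarrow> L) F"
proof -
  have "((\<lambda>t. ln (d t / x t)) \<longlongrightarrow> 0) F"
    using tendsto_ln[OF ratio_tendsto_one_if_log_balance[OF d balance]] by simp
  then have "((\<lambda>t. (d t - x t - \<alpha> * ln (d t)) + \<alpha> * ln (d t / x t)) \<longlongrightarrow> L + \<alpha> * 0) F"
    by (intro tendsto_intros balance)
  moreover have "eventually (\<lambda>t.
      (d t - x t - \<alpha> * ln (d t)) + \<alpha> * ln (d t / x t) = d t - x t - \<alpha> * ln (x t)) F"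
    using filterlim_at_top_dense[THEN iffD1, OF d, rule_format, of 0]
      filterlim_at_top_dense[THEN iffD1, OF x, rule_format, of 0]
    by eventually_elim (simp add: ln_div algebra_simps)
  ultimately show ?thesis by (simp add: tendsto_cong)
qed

lemma radius_bigo_of_chord:
  fixes m \<alpha> L :: real and R d :: "nat \<Rightarrow> real"
  assumes m: "m \<noteq> 0"
    and d_def: "\<And>K. d K = 2 * R K * sin (pi / real K)"
    and ratio: "((\<lambda>K. d K / (m * ln (real K))) \<longlongrightarrow> 1) at_top"
    and d_asymp: "((\<lambda>K. d K - m * ln (real K) - \<alpha> * ln (m * ln (real K))) \<longlongrightarrow> L) at_top"
  shows "(\<lambda>K. R K - m / (2 * pi) * real K * ln (real K)
              - 1 / (2 * pi) * \<alpha> * real K * ln (m * ln (real K))) \<in> O(\<lambda>K. real K)"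
proof (rule bigoI_tendsto)
  have "((\<lambda>K::nat. ln (real K) * (inverse (2 * real K * sin (pi / real K)) - inverse (2 * pi)))
          \<longlongrightarrow> 0) at_top" by real_asymp
  then have "((\<lambda>K. d K / (m * ln (real K)) * m
                  * (ln (real K) * (inverse (2 * real K * sin (pi / real K)) - inverse (2 * pi)))
               + (d K - m * ln (real K) - \<alpha> * ln (m * ln (real K))) / (2 * pi))
          \<longlongrightarrow> 1 * m * 0 + L / (2 * pi)) at_top"
    by (intro tendsto_intros ratio d_asymp) auto
  moreover have "eventually (\<lambda>K.
      d K / (m * ln (real K)) * m
        * (ln (real K) * (inverse (2 * real K * sin (pi / real K)) - inverse (2 * pi)))
      + (d K - m * ln (real K) - \<alpha> * ln (m * ln (real K))) / (2 * pi)
      = (R K - m / (2 * pi) * real K * ln (real K)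
           - 1 / (2 * pi) * \<alpha> * real K * ln (m * ln (real K))) / real K) at_top"
    using eventually_ge_at_top[of 2]
  proof eventually_elim
    case (elim K)
    have "sin (pi / real K) > 0" using elim by (simp add: sin_pi_div_pos)
    moreover have "ln (real K) > 0" using elim by simp
    ultimately show ?case using m elim d_def[of K] by (simp add: field_simps)
  qed
  ultimately show "((\<lambda>K. (R K - m / (2 * pi) * real K * ln (real K)
              - 1 / (2 * pi) * \<alpha> * real K * ln (m * ln (real K))) / real K)
          \<longlongrightarrow> L / (2 * pi)) at_top" by (simp add: tendsto_cong)
  show "eventually (\<lambda>K. real K \<noteq> 0) at_top"
    using eventually_gt_at_top[of 0] by eventually_elim simp
qed

theorem lemma3p3:
  fixes N :: nat and m a0 c :: real and \<Psi> :: "real \<Rightarrow> real"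
    and R d :: "nat \<Rightarrow> real"
  assumes N: "N \<ge> 2" and m: "m > 0" and a0: "a0 > 0" and c: "c > 0"
    and Psi_asymp: "(\<lambda>s. \<Psi> s / (c * s powr (- (real N - 1) / 2) * exp (- s)) - 1)
                      \<in> O[at_top](\<lambda>s. 1 / s)"
    and d_def: "\<And>K. d K = 2 * R K * sin (pi / real K)"
    and R_eq: "eventually (\<lambda>K. R K > 0 \<and>
                 a0 * m * R K powr (- m - 1) = 2 * sin (pi / real K) * \<Psi> (d K)) at_top"
    and d_lim: "filterlim d at_top at_top"
  shows "(\<lambda>K. d K - m * ln (real K) - (m - (real N - 3) / 2) * ln (m * ln (real K)))
           \<in> O(\<lambda>_. 1) \<and>
         (\<lambda>K. R K - m / (2 * pi) * real K * ln (real K)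
              - 1 / (2 * pi) * (m - (real N - 3) / 2) * real K * ln (m * ln (real K)))
           \<in> O(\<lambda>K. real K)"
proof -
  define \<alpha> where "\<alpha> = m - (real N - 3) / 2"
  define L where "L = ln c - ln (a0 * m) - m * ln 2 - m * ln pi"
  have "\<alpha> = m + 1 + - (real N - 1) / 2" by (simp add: \<alpha>_def field_simps)
  with chord_balance_log_limit[OF m a0 c Psi_asymp d_def R_eq d_lim]
  have balance: "((\<lambda>K. d K - m * ln (real K) - \<alpha> * ln (d K)) \<longlongrightarrow> L) at_top"
    by (simp add: L_def)
  have m_ln: "filterlim (\<lambda>K::nat. m * ln (real K)) at_top at_top" using m by real_asymp
  have d_asymp: "((\<lambda>K. d K - m * ln (real K) - \<alpha> * ln (m * ln (real K))) \<longlongrightarrow> L) at_top"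
    using log_balance_replace_argument[OF d_lim m_ln balance] .
  have "(\<lambda>K. d K - m * ln (real K) - \<alpha> * ln (m * ln (real K))) \<in> O(\<lambda>_. 1)"
    by (rule bigoI_tendsto[where c = L]) (use d_asymp in simp_all)
  moreover have "(\<lambda>K. R K - m / (2 * pi) * real K * ln (real K)
              - 1 / (2 * pi) * \<alpha> * real K * ln (m * ln (real K))) \<in> O(\<lambda>K. real K)"
    using m by (intro radius_bigo_of_chord[OF _ d_def _ d_asymp]
                      ratio_tendsto_one_if_log_balance[OF d_lim balance]) simp
  ultimately show ?thesis by (simp add: \<alpha>_def)
qed

end
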